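(* Let $\mathcal{A}$ be an essentially small additive category admitting finite coproducts. Endow the split Grothendieck group $\mathrm{K}_0^\oplus(\mathcal{A})$ with the heap structure $[\overline{A},\overline{B},\overline{C}]_\oplus:=\overline{A}-\overline{B}+\overline{C}$. Then there is a canonical epimorphism of heaps $\mathrm{K}_0^\oplus(\mathcal{A})\twoheadrightarrow \mathrm{K}_0^{\mathrm{heap}}(\mathcal{A})$ sending the class of an object to the class of the same object.
   Context: A heap is a set $H$ with a ternary operation $[\_,\_,\_]:H^3\to H$ satisfying $[a,b,[c,d,e]]=[[a,b,c],d,e]$ and $[x,x,y]=y=[y,x,x]$. The split Grothendieck group $\mathrm{K}_0^\oplus(\mathcal{A})$ of an additive category is the abelian group generated by isomorphism classes $\overline{A}$ of objects subject to $\overline{A\oplus B}=\overline{A}+\overline{B}$. For an essentially small category $\mathcal{C}$, its Grothendieck heap $\mathrm{K}_0^{\mathrm{heap}}(\mathcal{C})$ is the heap generated by the isomorphism classes $\overline{X}$ of objects of $\mathcal{C}$, subject to the relations $[\overline{X},\overline{Y},\overline{Z}]=\overline{X\sqcup_Y Z}$ for every pushout square $X\leftarrow Y\rightarrow Z$ in $\mathcal{C}$ in which at least one of the two maps $Y\to X$, $Y\to Z$ is a monomorphism. *)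

theory Defs
  imports Main
begin

text \<open>A category given by an object set and a morphism set (inside ambient types,
so it is automatically (essentially) small), together with preadditive data:
addition, zero morphisms and negation on hom-sets.\<close>

record ('o, 'm) addcat =
  cOb   :: "'o set"
  cMor  :: "'m set"
  cDom  :: "'m \<Rightarrow> 'o"
  cCod  :: "'m \<Rightarrow> 'o"
  cId   :: "'o \<Rightarrow> 'm"
  cComp :: "'m \<Rightarrow> 'm \<Rightarrow> 'm"   (* cComp g f = g o f *)
  cAdd  :: "'m \<Rightarrow> 'm \<Rightarrow> 'm"
  cZero :: "'o \<Rightarrow> 'o \<Rightarrow> 'm"
  cNeg  :: "'m \<Rightarrow> 'm"

definition Hom :: "('o, 'm) addcat \<Rightarrow> 'o \<Rightarrow> 'o \<Rightarrow> 'm set" where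
  "Hom C A B = {f \<in> cMor C. cDom C f = A \<and> cCod C f = B}"

definition category :: "('o, 'm) addcat \<Rightarrow> bool" where
  "category C \<longleftrightarrow>
     (\<forall>f\<in>cMor C. cDom C f \<in> cOb C \<and> cCod C f \<in> cOb C) \<and>
     (\<forall>A\<in>cOb C. cId C A \<in> Hom C A A) \<and>
     (\<forall>f\<in>cMor C. \<forall>g\<in>cMor C. cCod C f = cDom C g \<longrightarrow>
          cComp C g f \<in> Hom C (cDom C f) (cCod C g)) \<and>
     (\<forall>f\<in>cMor C. cComp C f (cId C (cDom C f)) = f \<and> cComp C (cId C (cCod C f)) f = f) \<and>
     (\<forall>f\<in>cMor C. \<forall>g\<in>cMor C. \<forall>h\<in>cMor C.
          cCod C f = cDom C g \<longrightarrow> cCod C g = cDom C h \<longrightarrow>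
          cComp C h (cComp C g f) = cComp C (cComp C h g) f)"

definition preadditive :: "('o, 'm) addcat \<Rightarrow> bool" where
  "preadditive C \<longleftrightarrow> category C \<and>
     (\<forall>A\<in>cOb C. \<forall>B\<in>cOb C.
        cZero C A B \<in> Hom C A B \<and>
        (\<forall>f\<in>Hom C A B. cNeg C f \<in> Hom C A B \<and>
           cAdd C (cZero C A B) f = f \<and> cAdd C (cNeg C f) f = cZero C A B) \<and>
        (\<forall>f\<in>Hom C A B. \<forall>g\<in>Hom C A B. cAdd C f g \<in> Hom C A B \<and> cAdd C f g = cAdd C g f) \<and>
        (\<forall>f\<in>Hom C A B. \<forall>g\<in>Hom C A B. \<forall>h\<in>Hom C A B.
            cAdd C (cAdd C f g) h = cAdd C f (cAdd C g h))) \<and>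
     (\<forall>A\<in>cOb C. \<forall>B\<in>cOb C. \<forall>D\<in>cOb C.
        \<forall>f\<in>Hom C A B. \<forall>g\<in>Hom C A B. \<forall>h\<in>Hom C B D.
          cComp C h (cAdd C f g) = cAdd C (cComp C h f) (cComp C h g)) \<and>
     (\<forall>A\<in>cOb C. \<forall>B\<in>cOb C. \<forall>D\<in>cOb C.
        \<forall>h\<in>Hom C A B. \<forall>f\<in>Hom C B D. \<forall>g\<in>Hom C B D.
          cComp C (cAdd C f g) h = cAdd C (cComp C f h) (cComp C g h))"

definition zero_object :: "('o, 'm) addcat \<Rightarrow> 'o \<Rightarrow> bool" where
  "zero_object C Z \<longleftrightarrow> Z \<in> cOb C \<and>
     (\<forall>A\<in>cOb C. (\<exists>!f. f \<in> Hom C Z A) \<and> (\<exists>!f. f \<in> Hom C A Z))"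

definition biproduct ::
  "('o, 'm) addcat \<Rightarrow> 'o \<Rightarrow> 'o \<Rightarrow> 'o \<Rightarrow> 'm \<Rightarrow> 'm \<Rightarrow> 'm \<Rightarrow> 'm \<Rightarrow> bool" where
  "biproduct C A B P i1 i2 p1 p2 \<longleftrightarrow>
     A \<in> cOb C \<and> B \<in> cOb C \<and> P \<in> cOb C \<and>
     i1 \<in> Hom C A P \<and> i2 \<in> Hom C B P \<and> p1 \<in> Hom C P A \<and> p2 \<in> Hom C P B \<and>
     cComp C p1 i1 = cId C A \<and> cComp C p2 i2 = cId C B \<and>
     cComp C p2 i1 = cZero C A B \<and> cComp C p1 i2 = cZero C B A \<and>
     cAdd C (cComp C i1 p1) (cComp C i2 p2) = cId C P"

definition additive :: "('o, 'm) addcat \<Rightarrow> bool" where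
  "additive C \<longleftrightarrow> preadditive C \<and> (\<exists>Z. zero_object C Z) \<and>
     (\<forall>A\<in>cOb C. \<forall>B\<in>cOb C. \<exists>P i1 i2 p1 p2. biproduct C A B P i1 i2 p1 p2)"

definition initial_object :: "('o, 'm) addcat \<Rightarrow> 'o \<Rightarrow> bool" where
  "initial_object C I \<longleftrightarrow> I \<in> cOb C \<and> (\<forall>A\<in>cOb C. \<exists>!f. f \<in> Hom C I A)"

definition coproduct :: "('o, 'm) addcat \<Rightarrow> 'o \<Rightarrow> 'o \<Rightarrow> 'o \<Rightarrow> 'm \<Rightarrow> 'm \<Rightarrow> bool" where
  "coproduct C A B P i1 i2 \<longleftrightarrow>
     P \<in> cOb C \<and> i1 \<in> Hom C A P \<and> i2 \<in> Hom C B P \<and>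
     (\<forall>Q\<in>cOb C. \<forall>a\<in>Hom C A Q. \<forall>b\<in>Hom C B Q.
        \<exists>!h. h \<in> Hom C P Q \<and> cComp C h i1 = a \<and> cComp C h i2 = b)"

definition has_finite_coproducts :: "('o, 'm) addcat \<Rightarrow> bool" where
  "has_finite_coproducts C \<longleftrightarrow> (\<exists>I. initial_object C I) \<and>
     (\<forall>A\<in>cOb C. \<forall>B\<in>cOb C. \<exists>P i1 i2. coproduct C A B P i1 i2)"

definition iso :: "('o, 'm) addcat \<Rightarrow> 'm \<Rightarrow> bool" where
  "iso C f \<longleftrightarrow> f \<in> cMor C \<and>
     (\<exists>g\<in>Hom C (cCod C f) (cDom C f).
        cComp C g f = cId C (cDom C f) \<and> cComp C f g = cId C (cCod C f))"

definition isomorphic :: "('o, 'm) addcat \<Rightarrow> 'o \<Rightarrow> 'o \<Rightarrow> bool" where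
  "isomorphic C A B \<longleftrightarrow> (\<exists>f\<in>Hom C A B. iso C f)"

definition mono :: "('o, 'm) addcat \<Rightarrow> 'm \<Rightarrow> bool" where
  "mono C f \<longleftrightarrow> f \<in> cMor C \<and>
     (\<forall>g\<in>cMor C. \<forall>h\<in>cMor C. cCod C g = cDom C f \<longrightarrow> cCod C h = cDom C f \<longrightarrow>
        cDom C g = cDom C h \<longrightarrow> cComp C f g = cComp C f h \<longrightarrow> g = h)"

text \<open>Pushout square  X <-f- Y -g-> Z,  with  u : X -> P,  v : Z -> P.\<close>
definition pushout ::
  "('o, 'm) addcat \<Rightarrow> 'o \<Rightarrow> 'o \<Rightarrow> 'o \<Rightarrow> 'm \<Rightarrow> 'm \<Rightarrow> 'o \<Rightarrow> 'm \<Rightarrow> 'm \<Rightarrow> bool" where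
  "pushout C X Y Z f g P u v \<longleftrightarrow>
     f \<in> Hom C Y X \<and> g \<in> Hom C Y Z \<and> P \<in> cOb C \<and> u \<in> Hom C X P \<and> v \<in> Hom C Z P \<and>
     cComp C u f = cComp C v g \<and>
     (\<forall>Q\<in>cOb C. \<forall>a\<in>Hom C X Q. \<forall>b\<in>Hom C Z Q. cComp C a f = cComp C b g \<longrightarrow>
        (\<exists>!h. h \<in> Hom C P Q \<and> cComp C h u = a \<and> cComp C h v = b))"

definition heap_hom ::
  "'a set \<Rightarrow> ('a \<Rightarrow> 'a \<Rightarrow> 'a \<Rightarrow> 'a) \<Rightarrow> 'b set \<Rightarrow> ('b \<Rightarrow> 'b \<Rightarrow> 'b \<Rightarrow> 'b) \<Rightarrow> ('a \<Rightarrow> 'b) \<Rightarrow> bool" where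
  "heap_hom H t H' t' \<phi> \<longleftrightarrow> (\<forall>x\<in>H. \<phi> x \<in> H') \<and>
     (\<forall>a\<in>H. \<forall>b\<in>H. \<forall>c\<in>H. \<phi> (t a b c) = t' (\<phi> a) (\<phi> b) (\<phi> c))"

datatype 'a hterm = HGen 'a | HOp "'a hterm" "'a hterm" "'a hterm"

inductive heap_cong :: "('a hterm \<Rightarrow> 'a hterm \<Rightarrow> bool) \<Rightarrow> 'a hterm \<Rightarrow> 'a hterm \<Rightarrow> bool"
  for R where
  hc_refl: "heap_cong R s s"
| hc_sym: "heap_cong R s t \<Longrightarrow> heap_cong R t s"
| hc_trans: "heap_cong R s t \<Longrightarrow> heap_cong R t u \<Longrightarrow> heap_cong R s u"
| hc_op: "heap_cong R a a' \<Longrightarrow> heap_cong R b b' \<Longrightarrow> heap_cong R c c' \<Longrightarrow>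
           heap_cong R (HOp a b c) (HOp a' b' c')"
| hc_assoc: "heap_cong R (HOp a b (HOp c d e)) (HOp (HOp a b c) d e)"
| hc_mal1: "heap_cong R (HOp x x y) y"
| hc_mal2: "heap_cong R (HOp y x x) y"
| hc_rel: "R s t \<Longrightarrow> heap_cong R s t"

definition pres_heap_carrier :: "'a set \<Rightarrow> ('a hterm \<Rightarrow> 'a hterm \<Rightarrow> bool) \<Rightarrow> 'a hterm set set" where
  "pres_heap_carrier X R = {{t'. heap_cong R t t'} | t. set_hterm t \<subseteq> X}"

definition pres_heap_op ::
  "('a hterm \<Rightarrow> 'a hterm \<Rightarrow> bool) \<Rightarrow> 'a hterm set \<Rightarrow> 'a hterm set \<Rightarrow> 'a hterm set \<Rightarrow> 'a hterm set" where
  "pres_heap_op R A B D =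
     {t'. heap_cong R (HOp (SOME a. a \<in> A) (SOME b. b \<in> B) (SOME d. d \<in> D)) t'}"

datatype 'a gterm = GGen 'a | GZero | GAdd "'a gterm" "'a gterm" | GNeg "'a gterm"

inductive ab_cong :: "('a gterm \<Rightarrow> 'a gterm \<Rightarrow> bool) \<Rightarrow> 'a gterm \<Rightarrow> 'a gterm \<Rightarrow> bool"
  for R where
  ac_refl: "ab_cong R s s"
| ac_sym: "ab_cong R s t \<Longrightarrow> ab_cong R t s"
| ac_trans: "ab_cong R s t \<Longrightarrow> ab_cong R t u \<Longrightarrow> ab_cong R s u"
| ac_add: "ab_cong R a a' \<Longrightarrow> ab_cong R b b' \<Longrightarrow> ab_cong R (GAdd a b) (GAdd a' b')"
| ac_neg: "ab_cong R a a' \<Longrightarrow> ab_cong R (GNeg a) (GNeg a')"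
| ac_assoc: "ab_cong R (GAdd (GAdd a b) c) (GAdd a (GAdd b c))"
| ac_comm: "ab_cong R (GAdd a b) (GAdd b a)"
| ac_zero: "ab_cong R (GAdd GZero a) a"
| ac_inv: "ab_cong R (GAdd (GNeg a) a) GZero"
| ac_rel: "R s t \<Longrightarrow> ab_cong R s t"

definition pres_ab_carrier :: "'a set \<Rightarrow> ('a gterm \<Rightarrow> 'a gterm \<Rightarrow> bool) \<Rightarrow> 'a gterm set set" where
  "pres_ab_carrier X R = {{t'. ab_cong R t t'} | t. set_gterm t \<subseteq> X}"

definition pres_ab_heap_op ::
  "('a gterm \<Rightarrow> 'a gterm \<Rightarrow> bool) \<Rightarrow> 'a gterm set \<Rightarrow> 'a gterm set \<Rightarrow> 'a gterm set \<Rightarrow> 'a gterm set" where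
  "pres_ab_heap_op R A B D =
     {t'. ab_cong R (GAdd (GAdd (SOME a. a \<in> A) (GNeg (SOME b. b \<in> B))) (SOME d. d \<in> D)) t'}"

definition split_rel :: "('o, 'm) addcat \<Rightarrow> 'o gterm \<Rightarrow> 'o gterm \<Rightarrow> bool" where
  "split_rel C s t \<longleftrightarrow>
     (\<exists>A B. isomorphic C A B \<and> s = GGen A \<and> t = GGen B) \<or>
     (\<exists>A B P i1 i2 p1 p2. biproduct C A B P i1 i2 p1 p2 \<and>
        s = GGen P \<and> t = GAdd (GGen A) (GGen B))"

definition K0split :: "('o, 'm) addcat \<Rightarrow> 'o gterm set set" where
  "K0split C = pres_ab_carrier (cOb C) (split_rel C)"

definition K0split_heap_op ::
  "('o, 'm) addcat \<Rightarrow> 'o gterm set \<Rightarrow> 'o gterm set \<Rightarrow> 'o gterm set \<Rightarrow> 'o gterm set" where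
  "K0split_heap_op C = pres_ab_heap_op (split_rel C)"

definition split_class :: "('o, 'm) addcat \<Rightarrow> 'o \<Rightarrow> 'o gterm set" where
  "split_class C A = {t. ab_cong (split_rel C) (GGen A) t}"

definition heap_rel :: "('o, 'm) addcat \<Rightarrow> 'o hterm \<Rightarrow> 'o hterm \<Rightarrow> bool" where
  "heap_rel C s t \<longleftrightarrow>
     (\<exists>A B. isomorphic C A B \<and> s = HGen A \<and> t = HGen B) \<or>
     (\<exists>X Y Z f g P u v. pushout C X Y Z f g P u v \<and> (mono C f \<or> mono C g) \<and>
        s = HOp (HGen X) (HGen Y) (HGen Z) \<and> t = HGen P)"

definition K0heap :: "('o, 'm) addcat \<Rightarrow> 'o hterm set set" where
  "K0heap C = pres_heap_carrier (cOb C) (heap_rel C)"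

definition K0heap_op ::
  "('o, 'm) addcat \<Rightarrow> 'o hterm set \<Rightarrow> 'o hterm set \<Rightarrow> 'o hterm set \<Rightarrow> 'o hterm set" where
  "K0heap_op C = pres_heap_op (heap_rel C)"

definition heap_class :: "('o, 'm) addcat \<Rightarrow> 'o \<Rightarrow> 'o hterm set" where
  "heap_class C A = {t. heap_cong (heap_rel C) (HGen A) t}"

end

theory Submission
  imports Defs
begin

text \<open>Fix a zero object \<open>Z\<close>. Every heap is a group with neutral element \<open>Z\<close> under
  \<open>x + y = [x, Z, y]\<close> and \<open>-x = [Z, x, Z]\<close>, and then \<open>[x, y, z] = x - y + z\<close>.
  In the Grothendieck heap this group is abelian: \<open>Z \<rightarrow> A\<close> is a monomorphism and the
  biproduct \<open>A \<oplus> B\<close> is the pushout of \<open>A \<leftarrow> Z \<rightarrow> B\<close>, so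
  \<open>[A, Z, B] = A \<oplus> B = [B, Z, A]\<close>, and commutation of the generators propagates to all
  elements. Hence the defining relations of the split Grothendieck group hold in it, the
  induced map on classes is a heap morphism, and it is onto because \<open>[x, y, z]\<close> is the
  image of \<open>x - y + z\<close>.\<close>

lemmas [trans] = hc_trans ac_trans

context
  fixes R :: "'a hterm \<Rightarrow> 'a hterm \<Rightarrow> bool"
begin

abbreviation heap_equiv (infix "\<approx>" 50) where "x \<approx> y \<equiv> heap_cong R x y"

lemma heap_cong_op_left: "a \<approx> a' \<Longrightarrow> HOp a b c \<approx> HOp a' b c"
  by (simp add: hc_op hc_refl)

lemma heap_cong_op_right: "c \<approx> c' \<Longrightarrow> HOp a b c \<approx> HOp a b c'"
  by (simp add: hc_op hc_refl)

lemma heap_cong_assoc_sym: "HOp (HOp a b c) d e \<approx> HOp a b (HOp c d e)"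
  by (rule hc_sym, rule hc_assoc)

lemma heap_cong_group_sub_add: "HOp (HOp x e (HOp e y e)) e z \<approx> HOp x y z"
proof -
  have "HOp x e (HOp e y e) \<approx> HOp (HOp x e e) y e" by (rule hc_assoc)
  also have "\<dots> \<approx> HOp x y e" by (rule heap_cong_op_left, rule hc_mal2)
  finally have "HOp (HOp x e (HOp e y e)) e z \<approx> HOp (HOp x y e) e z"
    by (rule heap_cong_op_left)
  also have "\<dots> \<approx> HOp x y (HOp e e z)" by (rule heap_cong_assoc_sym)
  also have "\<dots> \<approx> HOp x y z" by (rule heap_cong_op_right, rule hc_mal1)
  finally show ?thesis .
qed

lemma heap_cong_group_left_inverse: "HOp (HOp e x e) e x \<approx> e"
proof -
  have "HOp (HOp e x e) e x \<approx> HOp e x (HOp e e x)" by (rule heap_cong_assoc_sym)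
  also have "\<dots> \<approx> HOp e x x" by (rule heap_cong_op_right, rule hc_mal1)
  also have "\<dots> \<approx> e" by (rule hc_mal2)
  finally show ?thesis .
qed

definition heap_commute :: "'a hterm \<Rightarrow> 'a hterm \<Rightarrow> 'a hterm \<Rightarrow> bool" where
  "heap_commute e x y \<longleftrightarrow> HOp x e y \<approx> HOp y e x"

lemma heap_commute_sym: "heap_commute e x y \<Longrightarrow> heap_commute e y x"
  unfolding heap_commute_def by (rule hc_sym)

lemma heap_commute_neg:
  assumes "heap_commute e b y"
  shows "HOp e b y \<approx> HOp y b e"
proof -
  have "y \<approx> HOp e e y" by (rule hc_sym, rule hc_mal1)
  also have "\<dots> \<approx> HOp (HOp e b b) e y" by (rule heap_cong_op_left, rule hc_sym, rule hc_mal2)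
  also have "\<dots> \<approx> HOp e b (HOp b e y)" by (rule heap_cong_assoc_sym)
  also have "\<dots> \<approx> HOp e b (HOp y e b)"
    using assms unfolding heap_commute_def by (rule heap_cong_op_right)
  also have "\<dots> \<approx> HOp (HOp e b y) e b" by (rule hc_assoc)
  finally have "HOp y b e \<approx> HOp (HOp (HOp e b y) e b) b e" by (rule heap_cong_op_left)
  also have "\<dots> \<approx> HOp (HOp e b y) e (HOp b b e)" by (rule heap_cong_assoc_sym)
  also have "\<dots> \<approx> HOp (HOp e b y) e e" by (rule heap_cong_op_right, rule hc_mal1)
  also have "\<dots> \<approx> HOp e b y" by (rule hc_mal2)
  finally show ?thesis by (rule hc_sym)
qed

lemma heap_commute_op:
  assumes a: "heap_commute e a y" and b: "heap_commute e b y" and c: "heap_commute e c y"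
  shows "heap_commute e (HOp a b c) y"
proof -
  have "HOp a b y \<approx> HOp (HOp a e e) b y" by (rule heap_cong_op_left, rule hc_sym, rule hc_mal2)
  also have "\<dots> \<approx> HOp a e (HOp e b y)" by (rule heap_cong_assoc_sym)
  also have "\<dots> \<approx> HOp a e (HOp y b e)" by (rule heap_cong_op_right, rule heap_commute_neg[OF b])
  also have "\<dots> \<approx> HOp (HOp a e y) b e" by (rule hc_assoc)
  also have "\<dots> \<approx> HOp (HOp y e a) b e"
    using a unfolding heap_commute_def by (rule heap_cong_op_left)
  also have "\<dots> \<approx> HOp y e (HOp a b e)" by (rule heap_cong_assoc_sym)
  finally have aby: "HOp a b y \<approx> HOp y e (HOp a b e)" .
  have "HOp (HOp a b c) e y \<approx> HOp a b (HOp c e y)" by (rule heap_cong_assoc_sym)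
  also have "\<dots> \<approx> HOp a b (HOp y e c)"
    using c unfolding heap_commute_def by (rule heap_cong_op_right)
  also have "\<dots> \<approx> HOp (HOp a b y) e c" by (rule hc_assoc)
  also have "\<dots> \<approx> HOp (HOp y e (HOp a b e)) e c" by (rule heap_cong_op_left, rule aby)
  also have "\<dots> \<approx> HOp y e (HOp (HOp a b e) e c)" by (rule heap_cong_assoc_sym)
  also have "\<dots> \<approx> HOp y e (HOp a b (HOp e e c))" by (rule heap_cong_op_right, rule heap_cong_assoc_sym)
  also have "\<dots> \<approx> HOp y e (HOp a b c)" by (rule heap_cong_op_right, rule heap_cong_op_right, rule hc_mal1)
  finally show ?thesis unfolding heap_commute_def .
qed

lemma heap_commute_terms:
  assumes gens: "\<And>A B. A \<in> X \<Longrightarrow> B \<in> X \<Longrightarrow> heap_commute e (HGen A) (HGen B)"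
    and x: "set_hterm x \<subseteq> X" and y: "set_hterm y \<subseteq> X"
  shows "heap_commute e x y"
proof -
  have with_gen: "heap_commute e x (HGen B)" if "B \<in> X" "set_hterm x \<subseteq> X" for x B
    using that(2) by (induction x) (auto intro: heap_commute_op gens[OF _ that(1)])
  from y show ?thesis
  proof (induction y)
    case (HGen B)
    then show ?case using with_gen x by simp
  next
    case (HOp a b c)
    then have "heap_commute e a x" "heap_commute e b x" "heap_commute e c x"
      by (auto intro: heap_commute_sym)
    then show ?case by (rule heap_commute_sym[OF heap_commute_op])
  qed
qed

end

text \<open>Generators outside \<open>X\<close> may occur in representatives of a class; they are sent to
  the base point.\<close>

fun heap_term_of :: "'a set \<Rightarrow> 'a \<Rightarrow> 'a gterm \<Rightarrow> 'a hterm" where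
  "heap_term_of X z (GGen A) = (if A \<in> X then HGen A else HGen z)"
| "heap_term_of X z GZero = HGen z"
| "heap_term_of X z (GAdd a b) = HOp (heap_term_of X z a) (HGen z) (heap_term_of X z b)"
| "heap_term_of X z (GNeg a) = HOp (HGen z) (heap_term_of X z a) (HGen z)"

fun group_term_of :: "'a hterm \<Rightarrow> 'a gterm" where
  "group_term_of (HGen A) = GGen A"
| "group_term_of (HOp a b c) = GAdd (GAdd (group_term_of a) (GNeg (group_term_of b))) (group_term_of c)"

lemma set_heap_term_of: "z \<in> X \<Longrightarrow> set_hterm (heap_term_of X z t) \<subseteq> X"
  by (induction t) auto

lemma set_group_term_of: "set_gterm (group_term_of t) = set_hterm t"
  by (induction t) auto

lemma heap_term_of_sub_add:
  "heap_cong R (heap_term_of X z (GAdd (GAdd a (GNeg b)) c))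
     (HOp (heap_term_of X z a) (heap_term_of X z b) (heap_term_of X z c))"
  by (simp add: heap_cong_group_sub_add)

lemma heap_term_of_group_term_of:
  "set_hterm t \<subseteq> X \<Longrightarrow> heap_cong R (heap_term_of X z (group_term_of t)) t"
proof (induction t)
  case (HGen A)
  then show ?case by (simp add: hc_refl)
next
  case (HOp a b c)
  have "heap_cong R (heap_term_of X z (group_term_of (HOp a b c)))
      (HOp (heap_term_of X z (group_term_of a)) (heap_term_of X z (group_term_of b))
        (heap_term_of X z (group_term_of c)))"
    by (simp add: heap_cong_group_sub_add)
  also have "heap_cong R \<dots> (HOp a b c)"
    using HOp by (auto intro: hc_op)
  finally show ?case .
qed

lemma heap_term_of_onto:
  "set_hterm t \<subseteq> X \<Longrightarrow> \<exists>s. set_gterm s \<subseteq> X \<and> heap_cong R (heap_term_of X z s) t"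
  by (intro exI[of _ "group_term_of t"] conjI) (simp_all add: set_group_term_of heap_term_of_group_term_of)

lemma heap_term_of_ab_cong:
  assumes "z \<in> X"
    and gens_commute: "\<And>A B. A \<in> X \<Longrightarrow> B \<in> X \<Longrightarrow> heap_commute R (HGen z) (HGen A) (HGen B)"
    and rels: "\<And>s t. R' s t \<Longrightarrow> heap_cong R (heap_term_of X z s) (heap_term_of X z t)"
    and "ab_cong R' s t"
  shows "heap_cong R (heap_term_of X z s) (heap_term_of X z t)"
  using \<open>ab_cong R' s t\<close>
proof (induction rule: ab_cong.induct)
  case (ac_comm a b)
  have "heap_commute R (HGen z) (heap_term_of X z a) (heap_term_of X z b)"
    using gens_commute set_heap_term_of[OF \<open>z \<in> X\<close>] set_heap_term_of[OF \<open>z \<in> X\<close>]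
    by (rule heap_commute_terms)
  then show ?case by (simp add: heap_commute_def)
qed (auto intro: hc_refl hc_sym hc_trans hc_op hc_mal1 rels
    simp: heap_cong_assoc_sym heap_cong_group_left_inverse)

abbreviation ab_cong_class :: "('a gterm \<Rightarrow> 'a gterm \<Rightarrow> bool) \<Rightarrow> 'a gterm \<Rightarrow> 'a gterm set" where
  "ab_cong_class R t \<equiv> {t'. ab_cong R t t'}"

abbreviation heap_cong_class :: "('a hterm \<Rightarrow> 'a hterm \<Rightarrow> bool) \<Rightarrow> 'a hterm \<Rightarrow> 'a hterm set" where
  "heap_cong_class R t \<equiv> {t'. heap_cong R t t'}"

lemma ab_cong_class_eq: "ab_cong R a b \<Longrightarrow> ab_cong_class R a = ab_cong_class R b"
  by (auto intro: ac_trans ac_sym)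

lemma heap_cong_class_eq: "heap_cong R a b \<Longrightarrow> heap_cong_class R a = heap_cong_class R b"
  by (auto intro: hc_trans hc_sym)

lemma ab_cong_some_class: "ab_cong R t (SOME s. s \<in> ab_cong_class R t)"
  using someI[of "\<lambda>s. s \<in> ab_cong_class R t" t] by (simp add: ac_refl)

lemma heap_cong_some_class: "heap_cong R t (SOME s. s \<in> heap_cong_class R t)"
  using someI[of "\<lambda>s. s \<in> heap_cong_class R t" t] by (simp add: hc_refl)

lemma pres_ab_heap_op_classes:
  "pres_ab_heap_op R (ab_cong_class R a) (ab_cong_class R b) (ab_cong_class R c) =
     ab_cong_class R (GAdd (GAdd a (GNeg b)) c)"
  unfolding pres_ab_heap_op_def
  by (intro ab_cong_class_eq ac_add ac_neg ac_sym[OF ab_cong_some_class])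

lemma pres_heap_op_classes:
  "pres_heap_op R (heap_cong_class R a) (heap_cong_class R b) (heap_cong_class R c) =
     heap_cong_class R (HOp a b c)"
  unfolding pres_heap_op_def
  by (intro heap_cong_class_eq hc_op hc_sym[OF heap_cong_some_class])

definition induced_map ::
  "('a gterm \<Rightarrow> 'b hterm) \<Rightarrow> ('b hterm \<Rightarrow> 'b hterm \<Rightarrow> bool) \<Rightarrow> 'a gterm set \<Rightarrow> 'b hterm set" where
  "induced_map F R S = heap_cong_class R (F (SOME s. s \<in> S))"

locale cong_preserving =
  fixes F :: "'a gterm \<Rightarrow> 'b hterm" and R' :: "'a gterm \<Rightarrow> 'a gterm \<Rightarrow> bool"
    and R :: "'b hterm \<Rightarrow> 'b hterm \<Rightarrow> bool"
  assumes respects: "\<And>s t. ab_cong R' s t \<Longrightarrow> heap_cong R (F s) (F t)"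
begin

lemma induced_map_class: "induced_map F R (ab_cong_class R' t) = heap_cong_class R (F t)"
  unfolding induced_map_def by (intro heap_cong_class_eq respects ac_sym[OF ab_cong_some_class])

lemma induced_map_in_carrier:
  assumes F_set: "\<And>t. set_gterm t \<subseteq> X \<Longrightarrow> set_hterm (F t) \<subseteq> Y"
    and "S \<in> pres_ab_carrier X R'"
  shows "induced_map F R S \<in> pres_heap_carrier Y R"
proof -
  obtain t where "S = ab_cong_class R' t" and "set_gterm t \<subseteq> X"
    using \<open>S \<in> pres_ab_carrier X R'\<close> unfolding pres_ab_carrier_def by blast
  then show ?thesis
    unfolding pres_heap_carrier_def by (auto simp: induced_map_class dest: F_set)
qed

lemma induced_map_heap_hom:
  assumes F_set: "\<And>t. set_gterm t \<subseteq> X \<Longrightarrow> set_hterm (F t) \<subseteq> Y"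
    and F_op: "\<And>a b c. heap_cong R (F (GAdd (GAdd a (GNeg b)) c)) (HOp (F a) (F b) (F c))"
  shows "heap_hom (pres_ab_carrier X R') (pres_ab_heap_op R') (pres_heap_carrier Y R)
           (pres_heap_op R) (induced_map F R)"
  unfolding heap_hom_def
proof (intro conjI ballI)
  fix S assume "S \<in> pres_ab_carrier X R'"
  with F_set show "induced_map F R S \<in> pres_heap_carrier Y R" by (rule induced_map_in_carrier)
next
  fix A B D assume "A \<in> pres_ab_carrier X R'" "B \<in> pres_ab_carrier X R'" "D \<in> pres_ab_carrier X R'"
  then obtain a b d where "A = ab_cong_class R' a" "B = ab_cong_class R' b" "D = ab_cong_class R' d"
    unfolding pres_ab_carrier_def by blast
  then show "induced_map F R (pres_ab_heap_op R' A B D) =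
      pres_heap_op R (induced_map F R A) (induced_map F R B) (induced_map F R D)"
    by (simp add: pres_ab_heap_op_classes induced_map_class pres_heap_op_classes
        heap_cong_class_eq[OF F_op])
qed

lemma induced_map_image:
  assumes F_set: "\<And>t. set_gterm t \<subseteq> X \<Longrightarrow> set_hterm (F t) \<subseteq> Y"
    and F_onto: "\<And>t. set_hterm t \<subseteq> Y \<Longrightarrow> \<exists>s. set_gterm s \<subseteq> X \<and> heap_cong R (F s) t"
  shows "induced_map F R ` pres_ab_carrier X R' = pres_heap_carrier Y R"
proof
  show "induced_map F R ` pres_ab_carrier X R' \<subseteq> pres_heap_carrier Y R"
    using induced_map_in_carrier[OF F_set] by blast
next
  show "pres_heap_carrier Y R \<subseteq> induced_map F R ` pres_ab_carrier X R'"
  proof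
    fix T assume "T \<in> pres_heap_carrier Y R"
    then obtain t where T: "T = heap_cong_class R t" and "set_hterm t \<subseteq> Y"
      unfolding pres_heap_carrier_def by blast
    then obtain s where "set_gterm s \<subseteq> X" and "heap_cong R (F s) t"
      using F_onto by blast
    then have "ab_cong_class R' s \<in> pres_ab_carrier X R'" and "T = induced_map F R (ab_cong_class R' s)"
      unfolding pres_ab_carrier_def T induced_map_class by (auto simp: heap_cong_class_eq)
    then show "T \<in> induced_map F R ` pres_ab_carrier X R'" by blast
  qed
qed

end

lemma zero_object_Hom_from_eq:
  "zero_object C Z \<Longrightarrow> A \<in> cOb C \<Longrightarrow> f \<in> Hom C Z A \<Longrightarrow> g \<in> Hom C Z A \<Longrightarrow> f = g"
  unfolding zero_object_def by blast

lemma zero_object_Hom_to_eq: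
  "zero_object C Z \<Longrightarrow> A \<in> cOb C \<Longrightarrow> f \<in> Hom C A Z \<Longrightarrow> g \<in> Hom C A Z \<Longrightarrow> f = g"
  unfolding zero_object_def by blast

context
  fixes C :: "('o, 'm) addcat"
  assumes cat: "category C"
begin

lemma Hom_Ob: "f \<in> Hom C A B \<Longrightarrow> A \<in> cOb C \<and> B \<in> cOb C"
  using cat unfolding category_def Hom_def by auto

lemma comp_Hom: "f \<in> Hom C A B \<Longrightarrow> g \<in> Hom C B D \<Longrightarrow> cComp C g f \<in> Hom C A D"
  using cat unfolding category_def Hom_def by auto

lemma comp_id_right: "f \<in> Hom C A B \<Longrightarrow> cComp C f (cId C A) = f"
  using cat unfolding category_def Hom_def by auto

lemma comp_assoc:
  "f \<in> Hom C A B \<Longrightarrow> g \<in> Hom C B D \<Longrightarrow> h \<in> Hom C D E \<Longrightarrow>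
     cComp C h (cComp C g f) = cComp C (cComp C h g) f"
  using cat unfolding category_def Hom_def by auto

lemma isomorphic_Ob: "isomorphic C A B \<Longrightarrow> A \<in> cOb C \<and> B \<in> cOb C"
  unfolding isomorphic_def by (auto dest: Hom_Ob)

lemma zero_object_Hom_mono:
  assumes Z: "zero_object C Z" and z: "z \<in> Hom C Z A"
  shows "mono C z"
  unfolding mono_def
proof (intro conjI ballI impI)
  show "z \<in> cMor C" using z by (simp add: Hom_def)
  fix g h assume "g \<in> cMor C" "h \<in> cMor C" "cCod C g = cDom C z" "cCod C h = cDom C z"
    "cDom C g = cDom C h"
  then have "g \<in> Hom C (cDom C g) Z" "h \<in> Hom C (cDom C g) Z"
    using z by (simp_all add: Hom_def)
  with Z show "g = h" using Hom_Ob by (blast intro: zero_object_Hom_to_eq)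
qed

end

context
  fixes C :: "('o, 'm) addcat"
  assumes pre: "preadditive C"
begin

lemma preadditive_category: "category C"
  using pre preadditive_def by blast

lemma add_Hom: "f \<in> Hom C A B \<Longrightarrow> g \<in> Hom C A B \<Longrightarrow> cAdd C f g \<in> Hom C A B"
  using pre Hom_Ob[OF preadditive_category] unfolding preadditive_def by blast

lemma add_commute: "f \<in> Hom C A B \<Longrightarrow> g \<in> Hom C A B \<Longrightarrow> cAdd C f g = cAdd C g f"
  using pre Hom_Ob[OF preadditive_category] unfolding preadditive_def by blast

lemma add_assoc:
  "f \<in> Hom C A B \<Longrightarrow> g \<in> Hom C A B \<Longrightarrow> h \<in> Hom C A B \<Longrightarrow>
     cAdd C (cAdd C f g) h = cAdd C f (cAdd C g h)"
  using pre Hom_Ob[OF preadditive_category] unfolding preadditive_def by blast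

lemma zero_add: "f \<in> Hom C A B \<Longrightarrow> cAdd C (cZero C A B) f = f"
  using pre Hom_Ob[OF preadditive_category] unfolding preadditive_def by blast

lemma add_zero: "f \<in> Hom C A B \<Longrightarrow> cAdd C f (cZero C A B) = f"
  using pre Hom_Ob[OF preadditive_category] add_commute zero_add
  unfolding preadditive_def by metis

lemma neg_Hom: "f \<in> Hom C A B \<Longrightarrow> cNeg C f \<in> Hom C A B"
  using pre Hom_Ob[OF preadditive_category] unfolding preadditive_def by blast

lemma neg_add: "f \<in> Hom C A B \<Longrightarrow> cAdd C (cNeg C f) f = cZero C A B"
  using pre Hom_Ob[OF preadditive_category] unfolding preadditive_def by blast

lemma comp_add_left:
  "f \<in> Hom C A B \<Longrightarrow> g \<in> Hom C A B \<Longrightarrow> h \<in> Hom C B D \<Longrightarrow>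
     cComp C h (cAdd C f g) = cAdd C (cComp C h f) (cComp C h g)"
  using pre Hom_Ob[OF preadditive_category] unfolding preadditive_def by blast

lemma comp_add_right:
  "h \<in> Hom C A B \<Longrightarrow> f \<in> Hom C B D \<Longrightarrow> g \<in> Hom C B D \<Longrightarrow>
     cComp C (cAdd C f g) h = cAdd C (cComp C f h) (cComp C g h)"
  using pre Hom_Ob[OF preadditive_category] unfolding preadditive_def by blast

lemma add_idem_zero:
  assumes w: "w \<in> Hom C A B" and "cAdd C w w = w"
  shows "w = cZero C A B"
proof -
  have "w = cAdd C (cAdd C (cNeg C w) w) w" using zero_add[OF w] neg_add[OF w] by simp
  also have "\<dots> = cAdd C (cNeg C w) (cAdd C w w)" using add_assoc[OF neg_Hom[OF w] w w] .
  also have "\<dots> = cZero C A B" using \<open>cAdd C w w = w\<close> neg_add[OF w] by simp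
  finally show ?thesis .
qed

lemma comp_zero:
  assumes h: "h \<in> Hom C B D" and A: "A \<in> cOb C"
  shows "cComp C h (cZero C A B) = cZero C A D"
proof -
  have B: "B \<in> cOb C" using Hom_Ob[OF preadditive_category h] by simp
  have z: "cZero C A B \<in> Hom C A B" using pre A B unfolding preadditive_def by blast
  show ?thesis
  proof (rule add_idem_zero)
    show "cComp C h (cZero C A B) \<in> Hom C A D" using comp_Hom[OF preadditive_category z h] .
    show "cAdd C (cComp C h (cZero C A B)) (cComp C h (cZero C A B)) = cComp C h (cZero C A B)"
      using comp_add_left[OF z z h] zero_add[OF z] by simp
  qed
qed

lemma biproduct_swap: "biproduct C A B P i1 i2 p1 p2 \<Longrightarrow> biproduct C B A P i2 i1 p2 p1"
  unfolding biproduct_def using add_commute comp_Hom[OF preadditive_category] by metis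

lemma biproduct_pushout:
  assumes bp: "biproduct C A B P i1 i2 p1 p2" and Z: "zero_object C Z"
    and z1: "z1 \<in> Hom C Z A" and z2: "z2 \<in> Hom C Z B"
  shows "pushout C A Z B z1 z2 P i1 i2"
  unfolding pushout_def
proof (intro conjI ballI impI)
  have cat: "category C" by (rule preadditive_category)
  from bp have A: "A \<in> cOb C" and B: "B \<in> cOb C" and P: "P \<in> cOb C"
    and i1: "i1 \<in> Hom C A P" and i2: "i2 \<in> Hom C B P"
    and p1: "p1 \<in> Hom C P A" and p2: "p2 \<in> Hom C P B"
    and p1i1: "cComp C p1 i1 = cId C A" and p2i2: "cComp C p2 i2 = cId C B"
    and p2i1: "cComp C p2 i1 = cZero C A B" and p1i2: "cComp C p1 i2 = cZero C B A"
    and sum: "cAdd C (cComp C i1 p1) (cComp C i2 p2) = cId C P"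
    unfolding biproduct_def by simp_all
  show "z1 \<in> Hom C Z A" "z2 \<in> Hom C Z B" "P \<in> cOb C" "i1 \<in> Hom C A P" "i2 \<in> Hom C B P"
    by (fact z1 z2 P i1 i2)+
  show "cComp C i1 z1 = cComp C i2 z2"
    using Z P comp_Hom[OF cat z1 i1] comp_Hom[OF cat z2 i2] by (rule zero_object_Hom_from_eq)
  fix Q a b assume Q: "Q \<in> cOb C" and a: "a \<in> Hom C A Q" and b: "b \<in> Hom C B Q"
  define h where "h = cAdd C (cComp C a p1) (cComp C b p2)"
  have ap1: "cComp C a p1 \<in> Hom C P Q" and bp2: "cComp C b p2 \<in> Hom C P Q"
    using comp_Hom[OF cat p1 a] comp_Hom[OF cat p2 b] .
  have "cComp C h i1 = cAdd C (cComp C a (cComp C p1 i1)) (cComp C b (cComp C p2 i1))"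
    unfolding h_def comp_add_right[OF i1 ap1 bp2]
    using comp_assoc[OF cat i1 p1 a] comp_assoc[OF cat i1 p2 b] by simp
  also have "\<dots> = a"
    using p1i1 p2i1 comp_id_right[OF cat a] comp_zero[OF b A] add_zero[OF a] by simp
  finally have h1: "cComp C h i1 = a" .
  have "cComp C h i2 = cAdd C (cComp C a (cComp C p1 i2)) (cComp C b (cComp C p2 i2))"
    unfolding h_def comp_add_right[OF i2 ap1 bp2]
    using comp_assoc[OF cat i2 p1 a] comp_assoc[OF cat i2 p2 b] by simp
  also have "\<dots> = b"
    using p2i2 p1i2 comp_id_right[OF cat b] comp_zero[OF a B] zero_add[OF b] by simp
  finally have h2: "cComp C h i2 = b" .
  have unique: "k = h" if k: "k \<in> Hom C P Q" and "cComp C k i1 = a" and "cComp C k i2 = b" for k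
  proof -
    have "k = cComp C k (cAdd C (cComp C i1 p1) (cComp C i2 p2))"
      using comp_id_right[OF cat k] sum by simp
    also have "\<dots> = cAdd C (cComp C (cComp C k i1) p1) (cComp C (cComp C k i2) p2)"
      using comp_add_left[OF comp_Hom[OF cat p1 i1] comp_Hom[OF cat p2 i2] k]
        comp_assoc[OF cat p1 i1 k] comp_assoc[OF cat p2 i2 k] by simp
    finally show "k = h" unfolding h_def using that by simp
  qed
  show "\<exists>!h. h \<in> Hom C P Q \<and> cComp C h i1 = a \<and> cComp C h i2 = b"
    using add_Hom[OF ap1 bp2] h1 h2 unique unfolding h_def[symmetric] by (intro ex1I[of _ h]) blast+
qed

lemma heap_rel_biproduct:
  assumes bp: "biproduct C A B P i1 i2 p1 p2" and Z: "zero_object C Z"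
  shows "heap_rel C (HOp (HGen A) (HGen Z) (HGen B)) (HGen P)"
proof -
  have "A \<in> cOb C" "B \<in> cOb C" using bp unfolding biproduct_def by simp_all
  with Z obtain z1 z2 where z1: "z1 \<in> Hom C Z A" and z2: "z2 \<in> Hom C Z B"
    unfolding zero_object_def by (meson ex1E)
  have "pushout C A Z B z1 z2 P i1 i2" using bp Z z1 z2 by (rule biproduct_pushout)
  moreover have "mono C z1" using preadditive_category Z z1 by (rule zero_object_Hom_mono)
  ultimately show ?thesis unfolding heap_rel_def by (intro disjI2 exI conjI disjI1) simp_all
qed

end

context
  fixes C :: "('o, 'm) addcat" and Z :: 'o
  assumes add: "additive C" and Z: "zero_object C Z"
begin

lemma additive_heap_commute:
  assumes "A \<in> cOb C" and "B \<in> cOb C"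
  shows "heap_commute (heap_rel C) (HGen Z) (HGen A) (HGen B)"
proof -
  have pre: "preadditive C" using add unfolding additive_def by blast
  obtain P i1 i2 p1 p2 where bp: "biproduct C A B P i1 i2 p1 p2"
    using add assms unfolding additive_def by blast
  have "heap_cong (heap_rel C) (HOp (HGen A) (HGen Z) (HGen B)) (HGen P)"
    using heap_rel_biproduct[OF pre bp Z] by (rule hc_rel)
  also have "heap_cong (heap_rel C) (HGen P) (HOp (HGen B) (HGen Z) (HGen A))"
    using heap_rel_biproduct[OF pre biproduct_swap[OF pre bp] Z] by (rule hc_sym[OF hc_rel])
  finally show ?thesis unfolding heap_commute_def .
qed

lemma split_rel_heap_cong:
  assumes "split_rel C s t"
  shows "heap_cong (heap_rel C) (heap_term_of (cOb C) Z s) (heap_term_of (cOb C) Z t)"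
proof -
  have pre: "preadditive C" using add unfolding additive_def by blast
  from assms show ?thesis
    unfolding split_rel_def
  proof (elim disjE exE conjE)
    fix A B assume "isomorphic C A B" "s = GGen A" "t = GGen B"
    then show ?thesis
      using isomorphic_Ob[OF preadditive_category[OF pre]] by (auto intro: hc_rel simp: heap_rel_def)
  next
    fix A B P i1 i2 p1 p2
    assume bp: "biproduct C A B P i1 i2 p1 p2" and "s = GGen P" "t = GAdd (GGen A) (GGen B)"
    have "heap_rel C (HOp (HGen A) (HGen Z) (HGen B)) (HGen P)"
      using pre bp Z by (rule heap_rel_biproduct)
    then show ?thesis
      using bp \<open>s = GGen P\<close> \<open>t = GAdd (GGen A) (GGen B)\<close> unfolding biproduct_def
      by (simp add: hc_sym hc_rel)
  qed
qed

lemma split_ab_cong_heap_cong: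
  assumes "ab_cong (split_rel C) s t"
  shows "heap_cong (heap_rel C) (heap_term_of (cOb C) Z s) (heap_term_of (cOb C) Z t)"
proof -
  have "Z \<in> cOb C" using Z unfolding zero_object_def by simp
  then show ?thesis
    using additive_heap_commute split_rel_heap_cong assms by (rule heap_term_of_ab_cong)
qed

end

theorem theorem2p8:
  fixes C :: "('o, 'm) addcat"
  assumes "additive C"
    and "has_finite_coproducts C"
  shows "\<exists>\<phi>. heap_hom (K0split C) (K0split_heap_op C) (K0heap C) (K0heap_op C) \<phi> \<and>
             \<phi> ` K0split C = K0heap C \<and>
             (\<forall>A\<in>cOb C. \<phi> (split_class C A) = heap_class C A)"
proof -
  obtain Z where Z: "zero_object C Z" using \<open>additive C\<close> unfolding additive_def by blast
  then have "Z \<in> cOb C" unfolding zero_object_def by simp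
  interpret cong_preserving "heap_term_of (cOb C) Z" "split_rel C" "heap_rel C"
    using split_ab_cong_heap_cong[OF \<open>additive C\<close> Z] by unfold_locales
  note F_set = set_heap_term_of[OF \<open>Z \<in> cOb C\<close>]
  show ?thesis
  proof (intro exI conjI ballI)
    show "heap_hom (K0split C) (K0split_heap_op C) (K0heap C) (K0heap_op C)
        (induced_map (heap_term_of (cOb C) Z) (heap_rel C))"
      unfolding K0split_def K0split_heap_op_def K0heap_def K0heap_op_def
      using F_set heap_term_of_sub_add by (rule induced_map_heap_hom)
    show "induced_map (heap_term_of (cOb C) Z) (heap_rel C) ` K0split C = K0heap C"
      unfolding K0split_def K0heap_def using F_set heap_term_of_onto by (rule induced_map_image)
    show "induced_map (heap_term_of (cOb C) Z) (heap_rel C) (split_class C A) = heap_class C A"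
      if "A \<in> cOb C" for A
      using that induced_map_class[of "GGen A"] by (simp add: split_class_def heap_class_def)
  qed
qed

end
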